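(* Let $p$ be a prime, $q=p^l$, $m\ge1$, $n=2m$. Let $r=\rho(q-1)$ with $0\leqslant\rho\leqslant n-1$ and $\rho=2\rho'$ even, and let $I\subseteq M_r$ with $0\in I$. Let $V$ be an $\mathbb{F}_{q^2}$-subspace of $\mathbb{F}_{q^n}$ of dimension $m-\rho'$ over $\mathbb{F}_{q^2}$ and $\lambda\in\mathbb{F}_q^*$. Then the vector $x=(x_g)_{g\in\mathbb{F}_{q^n}^*}$ with $x_g=\lambda$ for $g\in V\setminus\{0\}$ and $x_g=0$ otherwise belongs to $\mathcal{C}_q(r,I,n)^*$.
   Context: Let $N=q^n-1$ and $\alpha$ a primitive element of $\mathbb{F}_{q^n}$. Every integer $0\le u\le q^n-1$ is written $u=\sum_{i=0}^{n-1}u_iq^i$, $u_i\in\{0,\dots,q-1\}$; $\mathrm{wt}_q(u)=\sum u_i$, $O(u)=\sum_{i\text{ odd}}u_i$, $E(u)=\sum_{i\text{ even}}u_i$. For $-1\le r<n(q-1)$, $Z_r=\{\alpha^u\mid 0<u\le q^n-1,\ \mathrm{wt}_q(u)\le n(q-1)-r-1\}$. For $0\le r\le n(q-1)$ and integer $k\ge0$, $\Theta^{(r)}_k=\{\alpha^u\mid 0\le u\le q^n-1,\ \mathrm{wt}_q(u)=n(q-1)-r,\ |O(u)-E(u)|=k\}$. $M_r$ is the set of even (resp. odd) integers $k\in[0,m(q-1)]$ when $r$ is even (resp. odd). For $I\subseteq M_r$: $\overline I=M_r\setminus I$, $Z_{r,I}=Z_r\cup\bigcup_{k\in\overline I}\Theta^{(r)}_k$.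 $\mathcal{C}_q(r,I,n)^*$ is the cyclic code of length $N$ over $\mathbb{F}_q$ with coordinates indexed by $\mathbb{F}_{q^n}^*$ consisting of all $x=(x_g)$ with $\sum_g x_g g^{u}=0$ for every $u\in[1,N]$ with $\alpha^u\in Z_{r,I}$. *)

theory Defs
  imports Main "HOL-Computational_Algebra.Primes"
begin

definition digit :: "nat \<Rightarrow> nat \<Rightarrow> nat \<Rightarrow> nat" where
  "digit q u i = (u div q ^ i) mod q"

definition wtq :: "nat \<Rightarrow> nat \<Rightarrow> nat \<Rightarrow> nat" where
  "wtq q n u = (\<Sum>i<n. digit q u i)"

definition Osum :: "nat \<Rightarrow> nat \<Rightarrow> nat \<Rightarrow> nat" where
  "Osum q n u = (\<Sum>i\<in>{i. i < n \<and> odd i}. digit q u i)"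

definition Esum :: "nat \<Rightarrow> nat \<Rightarrow> nat \<Rightarrow> nat" where
  "Esum q n u = (\<Sum>i\<in>{i. i < n \<and> even i}. digit q u i)"

definition Zset :: "nat \<Rightarrow> nat \<Rightarrow> 'a::field \<Rightarrow> nat \<Rightarrow> 'a set" where
  "Zset q n \<alpha> r = {\<alpha> ^ u | u. 0 < u \<and> u \<le> q ^ n - 1 \<and> wtq q n u + r + 1 \<le> n * (q - 1)}"

definition Theta :: "nat \<Rightarrow> nat \<Rightarrow> 'a::field \<Rightarrow> nat \<Rightarrow> nat \<Rightarrow> 'a set" where
  "Theta q n \<alpha> r k = {\<alpha> ^ u | u. u \<le> q ^ n - 1 \<and> wtq q n u + r = n * (q - 1)
      \<and> \<bar>int (Osum q n u) - int (Esum q n u)\<bar> = int k}"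

definition Mset :: "nat \<Rightarrow> nat \<Rightarrow> nat \<Rightarrow> nat set" where
  "Mset q m r = {k. k \<le> m * (q - 1) \<and> (even k \<longleftrightarrow> even r)}"

definition ZrI :: "nat \<Rightarrow> nat \<Rightarrow> nat \<Rightarrow> 'a::field \<Rightarrow> nat \<Rightarrow> nat set \<Rightarrow> 'a set" where
  "ZrI q n m \<alpha> r I = Zset q n \<alpha> r \<union> (\<Union>k \<in> Mset q m r - I. Theta q n \<alpha> r k)"

definition subfield_of_order :: "nat \<Rightarrow> 'a::field set" where
  "subfield_of_order q = {x. x ^ q = x}"

definition code :: "nat \<Rightarrow> nat \<Rightarrow> nat \<Rightarrow> 'a::{field,finite} \<Rightarrow> nat \<Rightarrow> nat set \<Rightarrow> ('a \<Rightarrow> 'a) set" where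
  "code q n m \<alpha> r I = {x. (\<forall>g. g \<noteq> 0 \<longrightarrow> x g \<in> subfield_of_order q) \<and>
      (\<forall>u \<in> {1..q ^ n - 1}. \<alpha> ^ u \<in> ZrI q n m \<alpha> r I \<longrightarrow>
          (\<Sum>g\<in>{g. g \<noteq> 0}. x g * g ^ u) = 0)}"

definition primitive_element :: "'a::field \<Rightarrow> bool" where
  "primitive_element \<alpha> \<longleftrightarrow> (\<forall>y. y \<noteq> 0 \<longrightarrow> (\<exists>u::nat. \<alpha> ^ u = y))"

definition is_subspace :: "'a::field set \<Rightarrow> 'a set \<Rightarrow> bool" where
  "is_subspace K V \<longleftrightarrow> 0 \<in> V \<and> (\<forall>x\<in>V. \<forall>y\<in>V. x + y \<in> V) \<and> (\<forall>c\<in>K. \<forall>x\<in>V. c * x \<in> V)"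

definition has_dim :: "'a::field set \<Rightarrow> 'a set \<Rightarrow> nat \<Rightarrow> bool" where
  "has_dim K V d \<longleftrightarrow> (\<exists>b::nat \<Rightarrow> 'a. (\<forall>i<d. b i \<in> V) \<and>
      V = {(\<Sum>i<d. c i * b i) | c. \<forall>i<d. c i \<in> K} \<and>
      (\<forall>c. (\<forall>i<d. c i \<in> K) \<longrightarrow> (\<Sum>i<d. c i * b i) = 0 \<longrightarrow> (\<forall>i<d. c i = 0)))"

end

theory Submission
  imports Defs "HOL-Number_Theory.Residues" "HOL-Library.Cardinality"
begin

(*
  For 0 < u < q^n the u-th syndrome of the word is lam times the power sum of g^u over g in V,
  so it suffices to show that this power sum vanishes for every exponent u defining the code.
  Write g = sum_i c_i b_i over an F_{q^2}-basis b of V. Each digit position j of u contributes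
  a factor g^(q^j) = sum_i c_i^(q^j) b_i^(q^j), so g^u expands into a sum over all ways sigma
  of distributing the wt_q(u) digit units among the basis vectors, and summing over the
  coefficients c_i in F_{q^2} turns each term into a product of power sums sum_c c^(E_i).
  Such a power sum vanishes unless E_i > 0 and (q^2 - 1) | E_i. As q^j is 1 or q modulo
  q^2 - 1 according to the parity of j, E_i = a_i + q b_i modulo q^2 - 1, where a_i and b_i
  count the even and odd digit units sent to b_i; divisibility forces a_i + b_i >= 2(q - 1),
  with equality only if a_i = b_i = q - 1. Summing over i, the power sum is zero unless
  wt_q(u) >= 2 dim V (q - 1), with O(u) = E(u) in case of equality. Since
  2 (m - rho') (q - 1) = n (q - 1) - r and 0 is in I, no exponent defining the code is of this kind.
*)

section \<open>Digits\<close>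

lemma mod_power_eq_sum_digits: "u mod q ^ n = (\<Sum>j<n. digit q u j * q ^ j)"
proof (induction n)
  case (Suc n)
  have "u mod q ^ Suc n = q ^ n * digit q u n + u mod q ^ n"
    unfolding power_Suc2 digit_def by (rule mod_mult2_eq)
  then show ?case using Suc by (simp add: mult.commute)
qed simp

text \<open>The multiset in which each digit position \<open>j < n\<close> of \<open>u\<close> occurs \<open>u\<^sub>j\<close> times, encoded as
  the set of pairs \<open>(j, s)\<close> with \<open>s < u\<^sub>j\<close>.\<close>
definition digit_units :: "nat \<Rightarrow> nat \<Rightarrow> nat \<Rightarrow> (nat \<times> nat) set" where
  "digit_units q n u = (SIGMA j:{..<n}. {..<digit q u j})"

lemma finite_digit_units [simp]: "finite (digit_units q n u)"
  by (simp add: digit_units_def)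

lemma sum_digit_units_power:
  assumes "u < q ^ n"
  shows "(\<Sum>t\<in>digit_units q n u. q ^ fst t) = u"
proof -
  have "(\<Sum>t\<in>digit_units q n u. q ^ fst t) = (\<Sum>j<n. \<Sum>s<digit q u j. q ^ j)"
    unfolding digit_units_def by (subst sum.Sigma) (auto simp: split_def)
  also have "\<dots> = u mod q ^ n" by (simp add: mod_power_eq_sum_digits)
  finally show ?thesis using assms by simp
qed

lemma card_digit_units_filter:
  "card {t\<in>digit_units q n u. P (fst t)} = (\<Sum>j\<in>{j. j < n \<and> P j}. digit q u j)"
proof -
  have "{t\<in>digit_units q n u. P (fst t)} = (SIGMA j:{j. j < n \<and> P j}. {..<digit q u j})"
    by (auto simp: digit_units_def)
  then show ?thesis by (simp add: card_SigmaI)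
qed

lemma card_digit_units_even: "card {t\<in>digit_units q n u. even (fst t)} = Esum q n u"
  using card_digit_units_filter[of q n u "\<lambda>j. even j"] by (simp add: Esum_def)

lemma card_digit_units_odd: "card {t\<in>digit_units q n u. odd (fst t)} = Osum q n u"
  using card_digit_units_filter[of q n u "\<lambda>j. odd j"] by (simp add: Osum_def)

lemma wtq_eq_Esum_plus_Osum: "wtq q n u = Esum q n u + Osum q n u"
proof -
  have "{..<n} = {j. j < n \<and> even j} \<union> {j. j < n \<and> odd j}" by auto
  then show ?thesis unfolding wtq_def Esum_def Osum_def by (simp only:) (rule sum.union_disjoint; auto)
qed

section \<open>Congruences modulo \<open>q\<^sup>2 - 1\<close>\<close>

lemma minus_one_dvd_power_minus_one:
  fixes x :: nat
  assumes "x \<ge> 1"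
  shows "(x - 1) dvd x ^ k - 1"
proof -
  have "[x = 1] (mod x - 1)" using assms by (simp add: cong_altdef_nat)
  then have "[x ^ k = 1 ^ k] (mod x - 1)" by (rule cong_pow)
  then show ?thesis using assms by (simp add: cong_altdef_nat)
qed

lemma power_cong_square_minus_one:
  fixes q :: nat
  assumes "q \<ge> 1"
  shows "[q ^ j = q ^ (j mod 2)] (mod q\<^sup>2 - 1)"
proof -
  have "[q\<^sup>2 = 1] (mod q\<^sup>2 - 1)" using assms by (simp add: cong_altdef_nat)
  then have "[(q\<^sup>2) ^ (j div 2) * q ^ (j mod 2) = 1 ^ (j div 2) * q ^ (j mod 2)] (mod q\<^sup>2 - 1)"
    by (intro cong_mult cong_pow cong_refl)
  moreover have "q ^ j = (q\<^sup>2) ^ (j div 2) * q ^ (j mod 2)"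
    by (metis div_mult_mod_eq power_add power_mult mult.commute)
  ultimately show ?thesis by simp
qed

lemma square_minus_one_dvd_imp_sum_ge:
  fixes q a b :: nat
  assumes q: "q \<ge> 2" and dvd: "(q\<^sup>2 - 1) dvd a + q * b" and pos: "a + b > 0"
  shows "2 * (q - 1) \<le> a + b \<and> (a + b = 2 * (q - 1) \<longrightarrow> a = q - 1 \<and> b = q - 1)"
proof -
  have square: "q\<^sup>2 - 1 = (q - 1) * (q + 1)" using q by (simp add: power2_eq_square algebra_simps)
  obtain t where t: "a + q * b = (q\<^sup>2 - 1) * t" using dvd by blast
  have "t > 0" using t pos q by (cases "t = 0") auto
  have "q * b \<le> (q\<^sup>2 - 1) * t" using t by (metis le_add2)
  also have "\<dots> < q * (q * t)" using q \<open>t > 0\<close> by (simp add: power2_eq_square)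
  finally have b_lt: "b < q * t" by simp
  define s where "s = (q + 1) * t - b"
  have "a + b + (q - 1) * b = a + q * b" using q by (cases q) auto
  also have "\<dots> = (q - 1) * ((q + 1) * t)" using t square by (simp only: mult.assoc)
  finally have sum_eq: "a + b = (q - 1) * s"
    by (simp add: s_def diff_mult_distrib2)
  have s_ge: "s \<ge> t + 1" using b_lt by (simp add: s_def)
  show ?thesis
  proof
    show "2 * (q - 1) \<le> a + b"
      using sum_eq s_ge \<open>t > 0\<close> by simp
    show "a + b = 2 * (q - 1) \<longrightarrow> a = q - 1 \<and> b = q - 1"
    proof
      assume "a + b = 2 * (q - 1)"
      then have "s = 2" using sum_eq q by (simp add: mult.commute)
      then have "t = 1" using s_ge \<open>t > 0\<close> by simp
      then have "b = q - 1" using \<open>s = 2\<close> b_lt by (simp add: s_def)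
      then show "a = q - 1 \<and> b = q - 1" using \<open>a + b = 2 * (q - 1)\<close> by simp
    qed
  qed
qed

lemma card_parity_bound:
  fixes q :: nat and S :: "(nat \<times> 'b) set"
  assumes q: "q \<ge> 2" and S: "finite S" "S \<noteq> {}" and dvd: "(q\<^sup>2 - 1) dvd (\<Sum>t\<in>S. q ^ fst t)"
  defines "a \<equiv> card {t\<in>S. even (fst t)}" and "b \<equiv> card {t\<in>S. odd (fst t)}"
  shows "2 * (q - 1) \<le> a + b \<and> (a + b = 2 * (q - 1) \<longrightarrow> a = q - 1 \<and> b = q - 1)"
proof (rule square_minus_one_dvd_imp_sum_ge[OF q])
  let ?Ev = "{t\<in>S. even (fst t)}" and ?Od = "{t\<in>S. odd (fst t)}"
  have parts: "?Ev \<union> ?Od = S" "?Ev \<inter> ?Od = {}" "finite ?Ev" "finite ?Od" using S(1) by auto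
  have "[(\<Sum>t\<in>S. q ^ fst t) = (\<Sum>t\<in>S. q ^ (fst t mod 2))] (mod q\<^sup>2 - 1)"
    using q by (intro cong_sum power_cong_square_minus_one) simp
  also have "(\<Sum>t\<in>S. q ^ (fst t mod 2)) = (\<Sum>t\<in>?Ev. q ^ (fst t mod 2)) + (\<Sum>t\<in>?Od. q ^ (fst t mod 2))"
    using sum.union_disjoint[OF parts(3,4,2), of "\<lambda>t. q ^ (fst t mod 2)"] unfolding parts(1) .
  also have "\<dots> = (\<Sum>t\<in>?Ev. 1) + (\<Sum>t\<in>?Od. q)"
    by (intro arg_cong2[where f = plus] sum.cong) (auto simp: mod2_eq_if)
  also have "\<dots> = a + q * b" by (simp add: a_def b_def)
  finally show "(q\<^sup>2 - 1) dvd a + q * b" using dvd by (simp add: cong_dvd_iff)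
  have "card S = a + b" using card_Un_disjoint[OF parts(3,4,2)] unfolding parts(1) a_def b_def .
  then show "a + b > 0" by (metis S card_gt_0_iff)
qed

lemma sum_bound_and_equality:
  fixes a b :: "'i \<Rightarrow> nat"
  assumes "finite A" and bound: "\<And>i. i \<in> A \<Longrightarrow> c \<le> a i + b i \<and> (a i + b i = c \<longrightarrow> a i = b i)"
  shows "card A * c \<le> sum a A + sum b A \<and> (sum a A + sum b A = card A * c \<longrightarrow> sum a A = sum b A)"
proof
  have "card A * c = (\<Sum>i\<in>A. c)" by simp
  also have "\<dots> \<le> (\<Sum>i\<in>A. a i + b i)" using bound by (intro sum_mono) blast
  finally show "card A * c \<le> sum a A + sum b A" by (simp add: sum.distrib)
  show "sum a A + sum b A = card A * c \<longrightarrow> sum a A = sum b A"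
  proof
    assume eq: "sum a A + sum b A = card A * c"
    have "a i + b i = c" if "i \<in> A" for i
    proof (rule ccontr)
      assume "a i + b i \<noteq> c"
      then have "c < a i + b i" using bound[OF that] by simp
      then have "(\<Sum>i\<in>A. c) < (\<Sum>i\<in>A. a i + b i)"
        using bound that by (intro sum_strict_mono_ex1[OF assms(1)]) blast+
      then show False using eq by (simp add: sum.distrib)
    qed
    then show "sum a A = sum b A" using bound by (intro sum.cong) auto
  qed
qed

lemma card_eq_sum_card_fibres:
  assumes "finite S" "finite A" "\<sigma> ` S \<subseteq> A"
  shows "card S = (\<Sum>i\<in>A. card {t\<in>S. \<sigma> t = i})"
  using sum.group[OF assms, of "\<lambda>_. 1::nat"] by simp

lemma card_parity_bound_partition:
  fixes q :: nat and T :: "(nat \<times> 'b) set" and \<sigma> :: "nat \<times> 'b \<Rightarrow> nat"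
  assumes q: "q \<ge> 2" and T: "finite T" and \<sigma>: "\<sigma> ` T \<subseteq> {..<d}"
    and fibres: "\<And>i. i < d \<Longrightarrow>
      {t\<in>T. \<sigma> t = i} \<noteq> {} \<and> (q\<^sup>2 - 1) dvd (\<Sum>t\<in>{t\<in>T. \<sigma> t = i}. q ^ fst t)"
  defines "a \<equiv> card {t\<in>T. even (fst t)}" and "b \<equiv> card {t\<in>T. odd (fst t)}"
  shows "2 * d * (q - 1) \<le> a + b \<and> (a + b = 2 * d * (q - 1) \<longrightarrow> a = b)"
proof -
  let ?fibre = "\<lambda>i. {t\<in>T. \<sigma> t = i}"
  define ev where "ev i = card {t\<in>?fibre i. even (fst t)}" for i
  define od where "od i = card {t\<in>?fibre i. odd (fst t)}" for i
  have "2 * (q - 1) \<le> ev i + od i \<and> (ev i + od i = 2 * (q - 1) \<longrightarrow> ev i = od i)" if "i < d" for i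
    using card_parity_bound[OF q _ conjunct1[OF fibres[OF that]] conjunct2[OF fibres[OF that]]] T
    unfolding ev_def od_def by auto
  then have bound: "d * (2 * (q - 1)) \<le> sum ev {..<d} + sum od {..<d}
      \<and> (sum ev {..<d} + sum od {..<d} = d * (2 * (q - 1)) \<longrightarrow> sum ev {..<d} = sum od {..<d})"
    using sum_bound_and_equality[of "{..<d}" "2 * (q - 1)" ev od] by simp
  have parity_sum: "(\<Sum>i<d. card {t\<in>?fibre i. P (fst t)}) = card {t\<in>T. P (fst t)}" for P
  proof -
    have "card {t\<in>T. P (fst t)} = (\<Sum>i<d. card {t\<in>{t\<in>T. P (fst t)}. \<sigma> t = i})"
      using \<sigma> T by (intro card_eq_sum_card_fibres) auto
    also have "\<dots> = (\<Sum>i<d. card {t\<in>?fibre i. P (fst t)})"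
      by (intro sum.cong refl arg_cong[where f = card]) auto
    finally show ?thesis by simp
  qed
  have "sum ev {..<d} = a" "sum od {..<d} = b"
    using parity_sum[of "\<lambda>j. even j"] parity_sum[of "\<lambda>j. odd j"] by (simp_all add: ev_def od_def a_def b_def)
  then show ?thesis using bound by (auto simp: mult.assoc mult.left_commute)
qed

section \<open>Finite fields and primitive elements\<close>

lemma finite_field_power_card_minus_one:
  fixes x :: "'a::{field,finite}"
  assumes "x \<noteq> 0"
  shows "x ^ (CARD('a) - 1) = 1"
proof -
  have "(\<Prod>y\<in>UNIV-{0}. x * y) = x ^ card (UNIV - {0::'a}) * \<Prod>(UNIV-{0})"
    by (simp add: prod.distrib)
  also have "card (UNIV - {0::'a}) = CARD('a) - 1" by (simp add: card_Diff_singleton)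
  also have "(\<Prod>y\<in>UNIV-{0}. x * y) = (\<Prod>y\<in>UNIV-{0}. y)"
    by (rule prod.reindex_bij_witness[of _ "\<lambda>y. y / x" "\<lambda>y. x * y"]) (use assms in auto)
  finally have "\<Prod>(UNIV-{0::'a}) * 1 = \<Prod>(UNIV-{0::'a}) * x ^ (CARD('a) - 1)"
    by (simp add: mult.commute)
  moreover have "\<Prod>(UNIV-{0::'a}) \<noteq> 0" by (simp add: prod_zero_iff)
  ultimately show ?thesis by (metis mult_left_cancel)
qed

lemma card_field_ge_two: "CARD('a::{field,finite}) \<ge> 2"
  using card_mono[of UNIV "{0, 1::'a}"] by simp

lemma CHAR_eq_if_card_eq_prime_power:
  fixes p :: nat
  assumes "prime p" "CARD('a::{field,finite}) = p ^ k"
  shows "CHAR('a) = p"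
proof -
  have "prime CHAR('a)" by (rule prime_CHAR_semidom[OF finite_imp_CHAR_pos]) simp
  moreover have "CHAR('a) dvd p ^ k" using CHAR_dvd_CARD[where 'a='a] assms(2) by simp
  ultimately show ?thesis using assms(1) prime_dvd_power primes_dvd_imp_eq by blast
qed

text \<open>The bound on the cardinality is needed: in \<open>\<bbbF>\<^sub>2\<close> the element \<open>0\<close> is primitive, as \<open>0 ^ 0 = 1\<close>.\<close>
lemma primitive_element_nonzero:
  fixes \<alpha> :: "'a::{field,finite}"
  assumes prim: "primitive_element \<alpha>" and card: "CARD('a) > 2"
  shows "\<alpha> \<noteq> 0"
proof
  assume "\<alpha> = 0"
  have "UNIV \<subseteq> {0, 1::'a}"
  proof
    fix y :: 'a
    show "y \<in> {0, 1}"
    proof (cases "y = 0")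
      case False
      then obtain u where "\<alpha> ^ u = y" using prim unfolding primitive_element_def by blast
      then show ?thesis using \<open>\<alpha> = 0\<close> by (cases u) auto
    qed simp
  qed
  then have "CARD('a) \<le> 2" using card_mono[of "{0, 1::'a}" UNIV] by (simp add: card_insert_if)
  then show False using card by simp
qed

lemma primitive_element_power_eq_one_iff:
  fixes \<alpha> :: "'a::{field,finite}"
  assumes prim: "primitive_element \<alpha>" and nonzero: "\<alpha> \<noteq> 0"
  shows "\<alpha> ^ s = 1 \<longleftrightarrow> (CARD('a) - 1) dvd s"
proof
  define N where "N = CARD('a) - 1"
  have period: "\<alpha> ^ s = \<alpha> ^ (s mod k)" if "\<alpha> ^ k = 1" for s k
  proof -
    have "\<alpha> ^ s = (\<alpha> ^ k) ^ (s div k) * \<alpha> ^ (s mod k)"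
      by (metis mult_div_mod_eq power_add power_mult)
    then show ?thesis using that by simp
  qed
  have N_le: "N \<le> k" if "0 < k" "\<alpha> ^ k = 1" for k
  proof -
    have "UNIV - {0} \<subseteq> (\<lambda>j. \<alpha> ^ j) ` {..<k}"
    proof
      fix y :: 'a assume "y \<in> UNIV - {0}"
      then obtain u where "\<alpha> ^ u = y" using prim unfolding primitive_element_def by auto
      then have "y = \<alpha> ^ (u mod k)" using period[OF that(2), of u] by simp
      then show "y \<in> (\<lambda>j. \<alpha> ^ j) ` {..<k}" using that(1) by simp
    qed
    then have "card (UNIV - {0::'a}) \<le> card {..<k}" by (rule surj_card_le[OF finite_lessThan])
    then show ?thesis by (simp add: N_def card_Diff_singleton)
  qed
  have "\<alpha> ^ N = 1" unfolding N_def by (rule finite_field_power_card_minus_one[OF nonzero])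
  then show "\<alpha> ^ s = 1" if "(CARD('a) - 1) dvd s" using that by (auto simp: N_def power_mult)
  assume "\<alpha> ^ s = 1"
  then have "\<alpha> ^ (s mod N) = 1" using period[OF \<open>\<alpha> ^ N = 1\<close>, of s] by simp
  moreover have "N > 0" using card_field_ge_two[where 'a='a] by (simp add: N_def)
  ultimately have "s mod N = 0" using N_le mod_less_divisor not_le by blast
  then show "(CARD('a) - 1) dvd s" by (simp add: N_def mod_eq_0_iff_dvd)
qed

lemma power_eq_if_primitive_power_eq:
  fixes \<alpha> g :: "'a::field"
  assumes "primitive_element \<alpha>" "\<alpha> ^ u = \<alpha> ^ v" "g \<noteq> 0"
  shows "g ^ u = g ^ v"
proof -
  obtain s where "g = \<alpha> ^ s" using assms(1,3) unfolding primitive_element_def by metis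
  then have "g ^ u = (\<alpha> ^ u) ^ s" "g ^ v = (\<alpha> ^ v) ^ s"
    by (simp_all add: power_mult[symmetric] mult.commute)
  then show ?thesis using assms(2) by simp
qed

lemma primitive_element_power_generates_subfield:
  fixes \<alpha> :: "'a::{field,finite}"
  assumes prim: "primitive_element \<alpha>" and nonzero: "\<alpha> \<noteq> 0" and dvd: "(Q - 1) dvd CARD('a) - 1"
  defines "\<beta> \<equiv> \<alpha> ^ ((CARD('a) - 1) div (Q - 1))"
  shows "\<beta> ^ E = 1 \<longleftrightarrow> (Q - 1) dvd E" and "\<beta> \<in> subfield_of_order Q" and "\<beta> \<noteq> 0"
proof -
  define M where "M = (CARD('a) - 1) div (Q - 1)"
  have N: "CARD('a) - 1 = M * (Q - 1)" using dvd by (simp add: M_def)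
  then have "M * (Q - 1) > 0" using card_field_ge_two[where 'a='a] by linarith
  then show order: "\<beta> ^ E = 1 \<longleftrightarrow> (Q - 1) dvd E" for E
    unfolding \<beta>_def M_def[symmetric] power_mult[symmetric]
      primitive_element_power_eq_one_iff[OF prim nonzero] N by simp
  have "Q = Suc (Q - 1)" using \<open>M * (Q - 1) > 0\<close> by simp
  then have "\<beta> ^ Q = \<beta> ^ (Q - 1) * \<beta>" by (metis power_Suc2)
  then show "\<beta> \<in> subfield_of_order Q" using order[of "Q - 1"] by (simp add: subfield_of_order_def)
  show "\<beta> \<noteq> 0" using nonzero by (simp add: \<beta>_def)
qed

section \<open>Power sums over a subfield\<close>

lemma frobenius_diff:
  fixes x y :: "'a::comm_ring_1"
  assumes "prime CHAR('a)" "m = CHAR('a) ^ k"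
  shows "(x - y) ^ m = x ^ m - y ^ m"
  using freshmans_dream'[OF assms, of "x - y" y] by (simp add: eq_diff_eq)

lemma subfield_of_order_add:
  fixes x y :: "'a::field"
  assumes "prime CHAR('a)" "Q = CHAR('a) ^ k"
    and "x \<in> subfield_of_order Q" "y \<in> subfield_of_order Q"
  shows "x + y \<in> subfield_of_order Q"
  using assms freshmans_dream'[OF assms(1,2)] by (simp add: subfield_of_order_def)

lemma subfield_of_order_diff:
  fixes x y :: "'a::field"
  assumes "prime CHAR('a)" "Q = CHAR('a) ^ k"
    and "x \<in> subfield_of_order Q" "y \<in> subfield_of_order Q"
  shows "x - y \<in> subfield_of_order Q"
  using assms frobenius_diff[OF assms(1,2)] by (simp add: subfield_of_order_def)

lemma one_in_subfield_of_order: "1 \<in> subfield_of_order Q"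
  by (simp add: subfield_of_order_def)

text \<open>Translation by 1 permutes the subfield, so its element sum equals itself plus its cardinality.\<close>
lemma of_nat_card_subfield_of_order:
  fixes Q :: nat
  assumes "prime CHAR('a::{field,finite})" "Q = CHAR('a) ^ k"
  shows "of_nat (card (subfield_of_order Q :: 'a set)) = (0::'a)"
proof -
  let ?K = "subfield_of_order Q :: 'a set"
  have "bij_betw (\<lambda>y. y + 1) ?K ?K"
    by (rule bij_betw_byWitness[of _ "\<lambda>y. y - 1"])
      (auto intro: subfield_of_order_add[OF assms] subfield_of_order_diff[OF assms] one_in_subfield_of_order)
  then have "(\<Sum>y\<in>?K. y) = (\<Sum>y\<in>?K. y + 1)"
    using sum.reindex_bij_betw[of "\<lambda>y. y + 1" ?K ?K "\<lambda>y. y"] by simp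
  also have "\<dots> = (\<Sum>y\<in>?K. y) + of_nat (card ?K)" by (simp add: sum.distrib)
  finally show ?thesis by simp
qed

lemma sum_subfield_of_order_power_eq_0:
  fixes \<beta> :: "'a::{field,finite}"
  assumes "\<beta> \<in> subfield_of_order Q" "\<beta> \<noteq> 0" "\<beta> ^ E \<noteq> 1"
  shows "(\<Sum>x\<in>subfield_of_order Q. x ^ E) = (0::'a)"
proof -
  let ?K = "subfield_of_order Q :: 'a set"
  have "\<beta> ^ Q = \<beta>" using assms(1) by (simp add: subfield_of_order_def)
  then have "bij_betw (\<lambda>y. \<beta> * y) ?K ?K"
    by (intro bij_betw_byWitness[of _ "\<lambda>y. inverse \<beta> * y"])
      (use assms(2) in \<open>auto simp: subfield_of_order_def power_mult_distrib power_inverse\<close>)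
  then have "(\<Sum>x\<in>?K. x ^ E) = (\<Sum>x\<in>?K. (\<beta> * x) ^ E)"
    using sum.reindex_bij_betw[of "\<lambda>y. \<beta> * y" ?K ?K "\<lambda>y. y ^ E"] by simp
  also have "\<dots> = \<beta> ^ E * (\<Sum>x\<in>?K. x ^ E)" by (simp add: power_mult_distrib sum_distrib_left)
  finally have "(\<beta> ^ E - 1) * (\<Sum>x\<in>?K. x ^ E) = 0" by (simp add: algebra_simps)
  then show ?thesis using assms(3) by simp
qed

lemma sum_subfield_of_order_power_neq_0_imp:
  fixes \<beta> :: "'a::{field,finite}"
  assumes "prime CHAR('a)" "Q = CHAR('a) ^ k"
    and "\<beta> \<in> subfield_of_order Q" "\<beta> \<noteq> 0" "\<And>E. \<beta> ^ E = 1 \<longleftrightarrow> (Q - 1) dvd E"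
    and "(\<Sum>x\<in>subfield_of_order Q. x ^ E) \<noteq> (0::'a)"
  shows "E > 0 \<and> (Q - 1) dvd E"
  using assms sum_subfield_of_order_power_eq_0[OF assms(3,4)] of_nat_card_subfield_of_order[OF assms(1,2)]
  by (cases "E = 0") auto

section \<open>Power sums over a subspace\<close>

lemma sum_span_eq_sum_coeffs:
  fixes b :: "nat \<Rightarrow> 'a::field" and K :: "'a set"
  assumes V: "V = {(\<Sum>i<d. c i * b i) | c. \<forall>i<d. c i \<in> K}"
    and indep: "\<forall>c. (\<forall>i<d. c i \<in> K) \<longrightarrow> (\<Sum>i<d. c i * b i) = 0 \<longrightarrow> (\<forall>i<d. c i = 0)"
    and diff: "\<And>x y. x \<in> K \<Longrightarrow> y \<in> K \<Longrightarrow> x - y \<in> K"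
  shows "(\<Sum>g\<in>V. f g) = (\<Sum>c\<in>PiE {..<d} (\<lambda>_. K). f (\<Sum>i<d. c i * b i))"
proof -
  let ?C = "PiE {..<d} (\<lambda>_. K)"
  define \<phi> where "\<phi> c = (\<Sum>i<d. c i * b i)" for c
  have "V = \<phi> ` ?C"
  proof
    show "V \<subseteq> \<phi> ` ?C"
    proof
      fix g assume "g \<in> V"
      then obtain c where c: "g = \<phi> c" "\<forall>i<d. c i \<in> K" unfolding V \<phi>_def by blast
      have "\<phi> (restrict c {..<d}) = g" unfolding c(1) \<phi>_def by (intro sum.cong) auto
      moreover have "restrict c {..<d} \<in> ?C" using c(2) by auto
      ultimately show "g \<in> \<phi> ` ?C" by blast
    qed
    show "\<phi> ` ?C \<subseteq> V"
    proof
      fix g assume "g \<in> \<phi> ` ?C"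
      then obtain c where "g = \<phi> c" "\<forall>i<d. c i \<in> K" by (auto simp: PiE_iff)
      then show "g \<in> V" unfolding V \<phi>_def by blast
    qed
  qed
  moreover have "inj_on \<phi> ?C"
  proof
    fix c c' assume c: "c \<in> ?C" "c' \<in> ?C" "\<phi> c = \<phi> c'"
    have "\<forall>i<d. c i - c' i \<in> K" using c(1,2) by (simp add: PiE_iff diff)
    moreover have "(\<Sum>i<d. (c i - c' i) * b i) = \<phi> c - \<phi> c'"
      unfolding \<phi>_def by (simp add: sum_subtractf left_diff_distrib)
    then have "(\<Sum>i<d. (c i - c' i) * b i) = 0" using c(3) by simp
    ultimately have "\<forall>i<d. c i - c' i = 0" by (rule mp[OF mp[OF spec[OF indep]]])
    then show "c = c'" using c(1,2) by (intro PiE_ext) auto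
  qed
  ultimately show ?thesis unfolding \<phi>_def by (simp add: sum.reindex)
qed

lemma power_sum_frobenius_expansion:
  fixes y :: "'b \<Rightarrow> 'a::comm_semiring_1"
  assumes "prime CHAR('a)" "finite T" "finite A" "\<And>t. t \<in> T \<Longrightarrow> \<exists>k. e t = CHAR('a) ^ k"
  shows "sum y A ^ (\<Sum>t\<in>T. e t) = (\<Sum>\<sigma>\<in>PiE T (\<lambda>_. A). \<Prod>t\<in>T. y (\<sigma> t) ^ e t)"
proof -
  have "sum y A ^ (\<Sum>t\<in>T. e t) = (\<Prod>t\<in>T. sum y A ^ e t)" by (rule power_sum)
  also have "\<dots> = (\<Prod>t\<in>T. \<Sum>i\<in>A. y i ^ e t)"
    using assms(4) freshmans_dream_sum'[OF assms(1)] by (intro prod.cong) blast+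
  also have "\<dots> = (\<Sum>\<sigma>\<in>PiE T (\<lambda>_. A). \<Prod>t\<in>T. y (\<sigma> t) ^ e t)"
    using assms(2,3) by (rule prod_sum_PiE)
  finally show ?thesis .
qed

lemma prod_power_group_fibres:
  fixes c :: "'b \<Rightarrow> 'a::comm_monoid_mult"
  assumes "finite T" "finite A" "\<sigma> ` T \<subseteq> A"
  shows "(\<Prod>t\<in>T. c (\<sigma> t) ^ e t) = (\<Prod>i\<in>A. c i ^ (\<Sum>t\<in>{t\<in>T. \<sigma> t = i}. e t))"
proof -
  have "(\<Prod>t\<in>T. c (\<sigma> t) ^ e t) = (\<Prod>i\<in>A. \<Prod>t\<in>{t\<in>T. \<sigma> t = i}. c (\<sigma> t) ^ e t)"
    by (rule prod.group[OF assms, symmetric])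
  also have "\<dots> = (\<Prod>i\<in>A. c i ^ (\<Sum>t\<in>{t\<in>T. \<sigma> t = i}. e t))"
    by (intro prod.cong refl) (simp add: power_sum)
  finally show ?thesis .
qed

lemma sum_coeffs_power_neq_0_imp_fibres:
  fixes b :: "nat \<Rightarrow> 'a::field" and K :: "'a set"
  assumes "prime CHAR('a)" "finite T" "finite K" "\<And>t. t \<in> T \<Longrightarrow> \<exists>k. e t = CHAR('a) ^ k"
    and "(\<Sum>c\<in>PiE {..<d} (\<lambda>_. K). (\<Sum>i<d. c i * b i) ^ (\<Sum>t\<in>T. e t)) \<noteq> 0"
  shows "\<exists>\<sigma>\<in>PiE T (\<lambda>_. {..<d}). \<forall>i<d. (\<Sum>x\<in>K. x ^ (\<Sum>t\<in>{t\<in>T. \<sigma> t = i}. e t)) \<noteq> 0"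
proof (rule ccontr)
  let ?C = "PiE {..<d} (\<lambda>_. K)" and ?P = "PiE T (\<lambda>_. {..<d})"
  let ?E = "\<lambda>\<sigma> i. \<Sum>t\<in>{t\<in>T. \<sigma> t = i}. e t"
  assume "\<not> ?thesis"
  then have vanish: "(\<Prod>i<d. \<Sum>x\<in>K. x ^ ?E \<sigma> i) = 0" if "\<sigma> \<in> ?P" for \<sigma>
    using that by auto
  have coeffs: "(\<Sum>c\<in>?C. \<Prod>t\<in>T. c (\<sigma> t) ^ e t) = 0" if "\<sigma> \<in> ?P" for \<sigma>
  proof -
    have "(\<Sum>c\<in>?C. \<Prod>t\<in>T. c (\<sigma> t) ^ e t) = (\<Sum>c\<in>?C. \<Prod>i<d. c i ^ ?E \<sigma> i)"
      using that assms(2) by (intro sum.cong refl prod_power_group_fibres) auto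
    also have "\<dots> = (\<Prod>i<d. \<Sum>x\<in>K. x ^ ?E \<sigma> i)"
      using assms(3) by (intro prod_sum_PiE[symmetric]) auto
    finally show ?thesis using vanish[OF that] by simp
  qed
  have "(\<Sum>c\<in>?C. (\<Sum>i<d. c i * b i) ^ (\<Sum>t\<in>T. e t))
      = (\<Sum>c\<in>?C. \<Sum>\<sigma>\<in>?P. (\<Prod>t\<in>T. c (\<sigma> t) ^ e t) * (\<Prod>t\<in>T. b (\<sigma> t) ^ e t))"
    by (simp add: power_sum_frobenius_expansion[OF assms(1,2) finite_lessThan assms(4)]
        power_mult_distrib prod.distrib)
  also have "\<dots> = (\<Sum>\<sigma>\<in>?P. (\<Sum>c\<in>?C. \<Prod>t\<in>T. c (\<sigma> t) ^ e t) * (\<Prod>t\<in>T. b (\<sigma> t) ^ e t))"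
    by (subst sum.swap) (simp add: sum_distrib_right)
  also have "\<dots> = 0" using coeffs by simp
  finally show False using assms(5) by simp
qed

theorem sum_subspace_power_neq_0_imp_weight:
  fixes b :: "nat \<Rightarrow> 'a::{field,finite}" and \<beta> :: 'a
  assumes char: "prime CHAR('a)" "q = CHAR('a) ^ l" and q: "q \<ge> 2"
    and \<beta>: "\<beta> \<in> subfield_of_order (q\<^sup>2)" "\<beta> \<noteq> 0" "\<And>E. \<beta> ^ E = 1 \<longleftrightarrow> (q\<^sup>2 - 1) dvd E"
    and V: "V = {(\<Sum>i<d. c i * b i) | c. \<forall>i<d. c i \<in> subfield_of_order (q\<^sup>2)}"
    and indep: "\<forall>c. (\<forall>i<d. c i \<in> subfield_of_order (q\<^sup>2)) \<longrightarrow> (\<Sum>i<d. c i * b i) = 0 \<longrightarrow> (\<forall>i<d. c i = 0)"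
    and u: "u < q ^ n" and nonzero: "(\<Sum>g\<in>V. g ^ u) \<noteq> 0"
  shows "2 * d * (q - 1) \<le> wtq q n u \<and> (wtq q n u = 2 * d * (q - 1) \<longrightarrow> Osum q n u = Esum q n u)"
proof -
  let ?K = "subfield_of_order (q\<^sup>2) :: 'a set" and ?T = "digit_units q n u"
  have Q: "q\<^sup>2 = CHAR('a) ^ (l * 2)" unfolding char(2) by (rule power_mult[symmetric])
  have finite_K: "finite ?K" by simp
  have frobenius: "\<exists>k. q ^ fst t = CHAR('a) ^ k" for t unfolding char(2) by (metis power_mult)
  have "(\<Sum>c\<in>PiE {..<d} (\<lambda>_. ?K). (\<Sum>i<d. c i * b i) ^ (\<Sum>t\<in>?T. q ^ fst t)) \<noteq> 0"
    using nonzero sum_span_eq_sum_coeffs[OF V indep subfield_of_order_diff[OF char(1) Q], of "\<lambda>g. g ^ u"]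
    by (simp add: sum_digit_units_power[OF u])
  then obtain \<sigma> where \<sigma>: "\<sigma> \<in> PiE ?T (\<lambda>_. {..<d})"
    and fibres: "\<forall>i<d. (\<Sum>x\<in>?K. x ^ (\<Sum>t\<in>{t\<in>?T. \<sigma> t = i}. q ^ fst t)) \<noteq> 0"
    using sum_coeffs_power_neq_0_imp_fibres[OF char(1) finite_digit_units finite_K, where e = "\<lambda>t. q ^ fst t"]
      frobenius
    by blast
  have "\<sigma> ` ?T \<subseteq> {..<d}" using \<sigma> by (auto simp: PiE_iff)
  moreover have "{t\<in>?T. \<sigma> t = i} \<noteq> {} \<and> (q\<^sup>2 - 1) dvd (\<Sum>t\<in>{t\<in>?T. \<sigma> t = i}. q ^ fst t)"
    if "i < d" for i
  proof -
    have "(\<Sum>t\<in>{t\<in>?T. \<sigma> t = i}. q ^ fst t) > 0 \<and> (q\<^sup>2 - 1) dvd (\<Sum>t\<in>{t\<in>?T. \<sigma> t = i}. q ^ fst t)"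
      using sum_subfield_of_order_power_neq_0_imp[OF char(1) Q \<beta>] fibres that by blast
    then show ?thesis by (metis less_irrefl sum.empty)
  qed
  ultimately have "2 * d * (q - 1) \<le> Esum q n u + Osum q n u
      \<and> (Esum q n u + Osum q n u = 2 * d * (q - 1) \<longrightarrow> Esum q n u = Osum q n u)"
    unfolding card_digit_units_even[symmetric] card_digit_units_odd[symmetric]
    by (rule card_parity_bound_partition[OF q finite_digit_units])
  then show ?thesis by (auto simp: wtq_eq_Esum_plus_Osum)
qed

section \<open>Codewords supported on a subspace\<close>

lemma sum_indicator_times_power:
  fixes V :: "'a::{field,finite} set"
  assumes "v > 0"
  shows "(\<Sum>g\<in>{g. g \<noteq> 0}. (if g \<in> V - {0} then lam else 0) * g ^ v) = lam * (\<Sum>g\<in>V. g ^ v)"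
proof -
  have "(\<Sum>g\<in>{g. g \<noteq> 0}. (if g \<in> V - {0} then lam else 0) * g ^ v)
      = (\<Sum>g\<in>V - {0}. (if g \<in> V - {0} then lam else 0) * g ^ v)"
    by (intro sum.mono_neutral_right) auto
  also have "\<dots> = (\<Sum>g\<in>V - {0}. lam * g ^ v)" by (intro sum.cong) auto
  also have "\<dots> = lam * (\<Sum>g\<in>V. g ^ v)"
    using assms by (simp add: sum_diff1 sum_distrib_left)
  finally show ?thesis .
qed

lemma code_memI:
  fixes \<alpha> :: "'a::{field,finite}" and x :: "'a \<Rightarrow> 'a"
  assumes prim: "primitive_element \<alpha>" and "0 \<in> I" and r: "r < n * (q - 1)"
    and entries: "\<And>g. g \<noteq> 0 \<Longrightarrow> x g \<in> subfield_of_order q"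
    and sums: "\<And>v. 0 < v \<Longrightarrow> v < q ^ n
      \<Longrightarrow> wtq q n v + r < n * (q - 1) \<or> (wtq q n v + r = n * (q - 1) \<and> Osum q n v \<noteq> Esum q n v)
      \<Longrightarrow> (\<Sum>g\<in>{g. g \<noteq> 0}. x g * g ^ v) = 0"
  shows "x \<in> code q n m \<alpha> r I"
proof -
  have "(\<Sum>g\<in>{g. g \<noteq> 0}. x g * g ^ u) = 0" if u: "\<alpha> ^ u \<in> ZrI q n m \<alpha> r I" for u
  proof -
    obtain v where v: "\<alpha> ^ u = \<alpha> ^ v" "0 < v" "v \<le> q ^ n - 1"
      and weight: "wtq q n v + r < n * (q - 1) \<or> (wtq q n v + r = n * (q - 1) \<and> Osum q n v \<noteq> Esum q n v)"
    proof -
      consider "\<alpha> ^ u \<in> Zset q n \<alpha> r" | k where "k \<in> Mset q m r - I" "\<alpha> ^ u \<in> Theta q n \<alpha> r k"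
        using u unfolding ZrI_def by blast
      then show ?thesis
      proof cases
        case 1
        then show ?thesis using that unfolding Zset_def by fastforce
      next
        case (2 k)
        then obtain v where v: "\<alpha> ^ u = \<alpha> ^ v" "v \<le> q ^ n - 1" "wtq q n v + r = n * (q - 1)"
          "\<bar>int (Osum q n v) - int (Esum q n v)\<bar> = int k"
          unfolding Theta_def by blast
        have "wtq q n 0 = 0" by (simp add: wtq_def digit_def)
        then have "v \<noteq> 0" using v(3) r by (cases v) auto
        moreover have "Osum q n v \<noteq> Esum q n v" using v(4) 2(1) \<open>0 \<in> I\<close> by auto
        ultimately show ?thesis using that v by blast
      qed
    qed
    then have "(\<Sum>g\<in>{g. g \<noteq> 0}. x g * g ^ u) = (\<Sum>g\<in>{g. g \<noteq> 0}. x g * g ^ v)"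
      using power_eq_if_primitive_power_eq[OF prim v(1)] by simp
    also have "\<dots> = 0" using sums[OF v(2) _ weight] v(2,3) by simp
    finally show ?thesis .
  qed
  then show ?thesis using entries unfolding code_def by blast
qed

lemma subspace_indicator_mem_code:
  fixes \<alpha> \<beta> lam :: "'a::{field,finite}" and b :: "nat \<Rightarrow> 'a"
  assumes char: "prime CHAR('a)" "q = CHAR('a) ^ l" and q: "q \<ge> 2"
    and prim: "primitive_element \<alpha>" and "0 \<in> I"
    and \<beta>: "\<beta> \<in> subfield_of_order (q\<^sup>2)" "\<beta> \<noteq> 0" "\<And>E. \<beta> ^ E = 1 \<longleftrightarrow> (q\<^sup>2 - 1) dvd E"
    and V: "V = {(\<Sum>i<d. c i * b i) | c. \<forall>i<d. c i \<in> subfield_of_order (q\<^sup>2)}"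
    and indep: "\<forall>c. (\<forall>i<d. c i \<in> subfield_of_order (q\<^sup>2)) \<longrightarrow> (\<Sum>i<d. c i * b i) = 0 \<longrightarrow> (\<forall>i<d. c i = 0)"
    and weight: "n * (q - 1) = 2 * d * (q - 1) + r" and "d \<ge> 1"
    and lam: "lam \<in> subfield_of_order q"
  shows "(\<lambda>g. if g \<in> V - {0} then lam else 0) \<in> code q n m \<alpha> r I"
proof (rule code_memI[OF prim \<open>0 \<in> I\<close>])
  show "r < n * (q - 1)" using weight q \<open>d \<ge> 1\<close> by simp
  show "(if g \<in> V - {0} then lam else 0) \<in> subfield_of_order q" for g
    using lam q by (simp add: subfield_of_order_def)
  fix v assume "0 < v" "v < q ^ n"
    and "wtq q n v + r < n * (q - 1) \<or> (wtq q n v + r = n * (q - 1) \<and> Osum q n v \<noteq> Esum q n v)"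
  then have "\<not> (2 * d * (q - 1) \<le> wtq q n v \<and> (wtq q n v = 2 * d * (q - 1) \<longrightarrow> Osum q n v = Esum q n v))"
    using weight by auto
  then have "(\<Sum>g\<in>V. g ^ v) = 0"
    using sum_subspace_power_neq_0_imp_weight[OF char q \<beta> V indep \<open>v < q ^ n\<close>] by blast
  then show "(\<Sum>g\<in>{g. g \<noteq> 0}. (if g \<in> V - {0} then lam else 0) * g ^ v) = 0"
    unfolding sum_indicator_times_power[OF \<open>0 < v\<close>] by simp
qed

theorem lemma5p4:
  fixes \<alpha> lam :: "'a::{field,finite}" and V :: "'a set"
    and p l q m n \<rho> \<rho>' r :: nat and I :: "nat set"
  assumes "prime p" and "l \<ge> 1" and "q = p ^ l"
    and "m \<ge> 1" and "n = 2 * m"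
    and "card (UNIV :: 'a set) = q ^ n"
    and "primitive_element \<alpha>"
    and "r = \<rho> * (q - 1)" and "\<rho> \<le> n - 1" and "\<rho> = 2 * \<rho>'"
    and "I \<subseteq> Mset q m r" and "0 \<in> I"
    and "is_subspace (subfield_of_order (q ^ 2)) V"
    and "has_dim (subfield_of_order (q ^ 2)) V (m - \<rho>')"
    and "lam \<in> subfield_of_order q" and "lam \<noteq> 0"
  shows "(\<lambda>g. if g \<in> V - {0} then lam else 0) \<in> code q n m \<alpha> r I"
proof -
  have q: "q \<ge> 2" using assms(2,3) one_less_power[OF prime_gt_1_nat[OF assms(1)], of l] by simp
  have char: "prime CHAR('a)" "q = CHAR('a) ^ l"
    using CHAR_eq_if_card_eq_prime_power[OF assms(1), of "l * n", where 'a='a] assms(1,3,6) by (simp_all add: power_mult)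
  have "q\<^sup>2 \<le> CARD('a)" using assms(4,5,6) q by (simp add: power_increasing)
  moreover have "4 \<le> q\<^sup>2" using mult_le_mono[OF q q] by (simp add: power2_eq_square)
  ultimately have nonzero: "\<alpha> \<noteq> 0" using primitive_element_nonzero[OF assms(7)] by simp
  have "(q\<^sup>2 - 1) dvd CARD('a) - 1"
    using minus_one_dvd_power_minus_one[of "q\<^sup>2" m] q assms(5,6) by (simp add: power_mult)
  note \<beta> = primitive_element_power_generates_subfield[OF assms(7) nonzero this]
  obtain b where "V = {(\<Sum>i<m - \<rho>'. c i * b i) | c. \<forall>i<m - \<rho>'. c i \<in> subfield_of_order (q\<^sup>2)}"
    and "\<forall>c. (\<forall>i<m - \<rho>'. c i \<in> subfield_of_order (q\<^sup>2)) \<longrightarrow> (\<Sum>i<m - \<rho>'. c i * b i) = 0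
      \<longrightarrow> (\<forall>i<m - \<rho>'. c i = 0)"
    using assms(14) unfolding has_dim_def by blast
  moreover have "\<rho>' < m" using assms(4,5,9,10) by arith
  then have "n = 2 * (m - \<rho>') + \<rho>" using assms(5,10) by simp
  then have "n * (q - 1) = 2 * (m - \<rho>') * (q - 1) + r" using assms(8) by (metis add_mult_distrib)
  ultimately show ?thesis
    using subspace_indicator_mem_code[OF char q assms(7,12) \<beta>(2,3,1)] \<open>\<rho>' < m\<close> assms(15) by simp
qed

end
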